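(* Let $(M,\mathbf{p})$ be an oriented projective manifold of dimension $n+1$ equipped with a section $\mathbb{T}^A{}_B$ of the adjoint tractor bundle $\mathcal{A}$ which is parallel for the tractor connection. Then the curvature $R_{ab}{}^C{}_D\in\Gamma(\Lambda^2T^*M\otimes\mathcal{A})$ of the normal tractor connection satisfies $R_{ab}{}^C{}_D\,\mathbb{T}^D{}_C=0$.
   Context: A projective structure $\mathbf{p}$ on $M$ ($\dim M=n+1$) is a class of torsion-free connections related by $\widehat\nabla_a\xi^b=\nabla_a\xi^b+\Upsilon_a\xi^b+\delta^b{}_a\Upsilon_c\xi^c$. $\mathcal{E}(w)$ denotes the density bundle $((\Lambda^{n+1}TM)^{\otimes2})^{w/(2n+4)}$. The (standard) tractor bundle $\mathcal{T}$ is the dual of $J^1\mathcal{E}(1)$; a choice $\nabla\in\mathbf{p}$ splits $\mathcal{T}\cong TM(-1)\oplus\mathcal{E}(-1)$, and the normal tractor connection is $\nabla^{\mathcal{T}}_a(\nu^b,\rho)=(\nabla_a\nu^b+\rho\delta^b{}_a,\nabla_a\rho-\mathsf{P}_{ab}\nu^b)$ (independent of $\nabla$), where $\mathsf{P}_{ab}=\frac{1}{n(n+2)}[(n+1)\mathrm{Ric}_{ab}+\mathrm{Ric}_{ba}]$ is the projective Schouten tensor. The adjoint tractor bundle $\mathcal{A}=\mathfrak{sl}(\mathcal{T})$ consists of trace-free endomorphisms of $\mathcal{T}$, with the induced connection. The curvature of $\nabla^{\mathcal{T}}$ is a $2$-form with values in $\mathcal{A}$; in a splitting it is $R_{ab}{}^C{}_D=W_{ab}{}^c{}_dW^C{}_cZ_D{}^d-C_{abd}Z_D{}^dX^C$,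 with $W$ the projective Weyl tensor, $C_{abc}=\nabla_a\mathsf{P}_{bc}-\nabla_b\mathsf{P}_{ac}$ the projective Cotton tensor, $W^C{}_c$ the inclusion $TM(-1)\to\mathcal{T}$, $X^C$ the canonical tractor and $Z_D{}^d$ the projection $\mathcal{T}\to TM(-1)$. *)

theory Defs
  imports "HOL-Analysis.Analysis"
begin

text \<open>The manifold M of dimension n+1 is replaced by an open
  set U in real^'n with CARD('n) = n+1 (coordinates x^1..x^{n+1} indexed by 'n).
  A connection in the projective class is given by its Christoffel symbols
  Gam b a c = Gamma^b_{ac}. Tractor indices range over 'n option:
  Some b = the TM(-1) slot (coordinate frame), None = the E(-1) slot, all densities being
  trivialised by the coordinate volume form.\<close>

definition partial :: "'n::finite \<Rightarrow> (real^'n \<Rightarrow> real) \<Rightarrow> real^'n \<Rightarrow> real" where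
  "partial i f x = deriv (\<lambda>t. f (x + t *\<^sub>R axis i 1)) 0"

fun iterpd :: "'n::finite list \<Rightarrow> (real^'n \<Rightarrow> real) \<Rightarrow> real^'n \<Rightarrow> real" where
  "iterpd [] f = f"
| "iterpd (i # is) f = partial i (iterpd is f)"

definition smooth_fun_on :: "(real^'n::finite) set \<Rightarrow> (real^'n \<Rightarrow> real) \<Rightarrow> bool" where
  "smooth_fun_on U f \<longleftrightarrow>
     (\<forall>is. continuous_on U (iterpd is f) \<and> (\<forall>x\<in>U. iterpd is f differentiable (at x)))"

type_synonym 'n christoffel = "'n \<Rightarrow> 'n \<Rightarrow> 'n \<Rightarrow> real^'n \<Rightarrow> real"

definition dimn :: "'n::finite itself \<Rightarrow> real" where
  "dimn _ = real CARD('n) - 1"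

text \<open>Riemann curvature: (nabla_a nabla_b - nabla_b nabla_a) v^c = R_ab^c_d v^d.\<close>
definition riem :: "'n::finite christoffel \<Rightarrow> 'n \<Rightarrow> 'n \<Rightarrow> 'n \<Rightarrow> 'n \<Rightarrow> real^'n \<Rightarrow> real" where
  "riem Gam a b c d x =
     partial a (Gam c b d) x - partial b (Gam c a d) x
     + (\<Sum>e\<in>UNIV. Gam c a e x * Gam e b d x - Gam c b e x * Gam e a d x)"

definition ric :: "'n::finite christoffel \<Rightarrow> 'n \<Rightarrow> 'n \<Rightarrow> real^'n \<Rightarrow> real" where
  "ric Gam b d x = (\<Sum>a\<in>UNIV. riem Gam a b a d x)"

definition schouten :: "'n::finite christoffel \<Rightarrow> 'n \<Rightarrow> 'n \<Rightarrow> real^'n \<Rightarrow> real" where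
  "schouten Gam a b x =
     ((dimn TYPE('n) + 1) * ric Gam a b x + ric Gam b a x)
       / (dimn TYPE('n) * (dimn TYPE('n) + 2))"

definition trGam :: "'n::finite christoffel \<Rightarrow> 'n \<Rightarrow> real^'n \<Rightarrow> real" where
  "trGam Gam a x = (\<Sum>c\<in>UNIV. Gam c c a x)"

text \<open>Connection matrix of the normal tractor connection in the splitting and frame above:
  nabla_a s^C = partial_a s^C + tconn a C D s^D, i.e.
  nabla_a (nu^b, rho) = (nabla_a nu^b + rho delta^b_a, nabla_a rho - P_ab nu^b),
  with nabla on weight -1 densities: partial - trGam/(n+2).\<close>
definition tconn :: "'n::finite christoffel \<Rightarrow> 'n \<Rightarrow> 'n option \<Rightarrow> 'n option \<Rightarrow> real^'n \<Rightarrow> real" where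
  "tconn Gam a C D x =
     (case (C, D) of
        (Some b, Some c) \<Rightarrow> Gam b a c x - (if b = c then trGam Gam a x / (dimn TYPE('n) + 2) else 0)
      | (Some b, None) \<Rightarrow> (if b = a then 1 else 0)
      | (None, Some c) \<Rightarrow> - schouten Gam a c x
      | (None, None) \<Rightarrow> - trGam Gam a x / (dimn TYPE('n) + 2))"

text \<open>Curvature of the tractor connection: (nabla_a nabla_b - nabla_b nabla_a) s^C = R_ab^C_D s^D.\<close>
definition tcurv :: "'n::finite christoffel \<Rightarrow> 'n \<Rightarrow> 'n \<Rightarrow> 'n option \<Rightarrow> 'n option \<Rightarrow> real^'n \<Rightarrow> real" where
  "tcurv Gam a b C D x =
     partial a (tconn Gam b C D) x - partial b (tconn Gam a C D) x
     + (\<Sum>E\<in>UNIV. tconn Gam a C E x * tconn Gam b E D x - tconn Gam b C E x * tconn Gam a E D x)"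

definition parallel_adjoint ::
  "'n::finite christoffel \<Rightarrow> (real^'n) set \<Rightarrow> ('n option \<Rightarrow> 'n option \<Rightarrow> real^'n \<Rightarrow> real) \<Rightarrow> bool" where
  "parallel_adjoint Gam U T \<longleftrightarrow>
     (\<forall>C D. smooth_fun_on U (T C D)) \<and>
     (\<forall>x\<in>U. (\<Sum>C\<in>UNIV. T C C x) = 0) \<and>
     (\<forall>x\<in>U. \<forall>a C D. partial a (T C D) x
        + (\<Sum>E\<in>UNIV. tconn Gam a C E x * T E D x - T C E x * tconn Gam a E D x) = 0)"

end

theory Submission
  imports Defs "HOL-Library.Function_Algebras"
begin

text \<open>A parallel section \<open>T\<close> commutes with the curvature: differentiating \<open>\<nabla>T = 0\<close> once
  more and antisymmetrising gives \<open>[R\<^sub>a\<^sub>b, T] = 0\<close>. As \<open>R\<^sub>a\<^sub>b\<close> annihilates the canonical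
  tractor \<open>X\<close>, so does \<open>R\<^sub>a\<^sub>b T\<close>, and the \<open>X\<close>-part of the trace of \<open>R\<^sub>a\<^sub>b T\<close> vanishes.
  For the \<open>TM(-1)\<close>-part, the \<open>TM(-1)\<close>-component of \<open>\<nabla>\<^sub>c X\<close> is the identity; together with
  \<open>\<nabla>T = 0\<close> and the derivative of \<open>R\<^sub>a\<^sub>b T X = 0\<close> this turns the diagonal entry
  \<open>(R\<^sub>a\<^sub>b T)\<^sup>c\<^sub>c\<close> into \<open>-((\<nabla>\<^sub>c R\<^sub>a\<^sub>b) T X)\<^sup>c\<close>. By the Bianchi identity, summing over \<open>c\<close>
  gives \<open>\<Sum>\<^sub>c ((\<nabla>\<^sub>a R\<^sub>b\<^sub>c + \<nabla>\<^sub>b R\<^sub>c\<^sub>a) T X)\<^sup>c\<close>, which vanishes because the curvature is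
  trace-free in the form index and the upper \<open>TM(-1)\<close> index and kills \<open>T X\<close>.\<close>

section \<open>Coordinate partial derivatives\<close>

lemma has_real_derivative_along_line:
  fixes f :: "real^'n::finite \<Rightarrow> real"
  assumes "(f has_derivative f') (at (x + s *\<^sub>R v))"
  shows "((\<lambda>t. f (x + t *\<^sub>R v)) has_real_derivative f' v) (at s)"
proof -
  have "((\<lambda>t. x + t *\<^sub>R v) has_derivative (\<lambda>t. t *\<^sub>R v)) (at s)"
    by (auto intro!: derivative_eq_intros)
  then have "((f \<circ> (\<lambda>t. x + t *\<^sub>R v)) has_derivative (f' \<circ> (\<lambda>t. t *\<^sub>R v))) (at s)"
    by (rule diff_chain_at) (simp add: assms)
  moreover have "f' \<circ> (\<lambda>t. t *\<^sub>R v) = (\<lambda>t. f' v * t)"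
    using has_derivative_linear[OF assms] by (auto simp: o_def linear_scale)
  ultimately show ?thesis by (simp add: has_field_derivative_def o_def)
qed

lemma partial_eq:
  fixes f :: "real^'n::finite \<Rightarrow> real"
  assumes "(f has_derivative f') (at x)"
  shows "partial i f x = f' (axis i 1)"
  unfolding partial_def
  by (rule DERIV_imp_deriv, rule has_real_derivative_along_line) (simp add: assms)

lemma has_real_derivative_partial:
  fixes f :: "real^'n::finite \<Rightarrow> real"
  assumes "f differentiable (at (x + s *\<^sub>R axis i 1))"
  shows "((\<lambda>t. f (x + t *\<^sub>R axis i 1)) has_real_derivative partial i f (x + s *\<^sub>R axis i 1)) (at s)"
proof -
  obtain f' where "(f has_derivative f') (at (x + s *\<^sub>R axis i 1))"
    using assms by (auto simp: differentiable_def)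
  then show ?thesis
    using has_real_derivative_along_line partial_eq by metis
qed

lemma partial_const: "partial i (\<lambda>y. c) x = 0"
  by (rule partial_eq) simp

lemma partial_add:
  fixes f g :: "real^'n::finite \<Rightarrow> real"
  assumes "f differentiable (at x)" "g differentiable (at x)"
  shows "partial i (\<lambda>y. f y + g y) x = partial i f x + partial i g x"
proof -
  obtain f' g' where f': "(f has_derivative f') (at x)" and g': "(g has_derivative g') (at x)"
    using assms by (auto simp: differentiable_def)
  show ?thesis
    using partial_eq[OF has_derivative_add[OF f' g']] partial_eq[OF f'] partial_eq[OF g'] by simp
qed

lemma partial_diff:
  fixes f g :: "real^'n::finite \<Rightarrow> real"
  assumes "f differentiable (at x)" "g differentiable (at x)"
  shows "partial i (\<lambda>y. f y - g y) x = partial i f x - partial i g x"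
proof -
  obtain f' g' where f': "(f has_derivative f') (at x)" and g': "(g has_derivative g') (at x)"
    using assms by (auto simp: differentiable_def)
  show ?thesis
    using partial_eq[OF has_derivative_diff[OF f' g']] partial_eq[OF f'] partial_eq[OF g'] by simp
qed

lemma partial_mult:
  fixes f g :: "real^'n::finite \<Rightarrow> real"
  assumes "f differentiable (at x)" "g differentiable (at x)"
  shows "partial i (\<lambda>y. f y * g y) x = partial i f x * g x + f x * partial i g x"
proof -
  obtain f' g' where f': "(f has_derivative f') (at x)" and g': "(g has_derivative g') (at x)"
    using assms by (auto simp: differentiable_def)
  show ?thesis
    using partial_eq[OF has_derivative_mult[OF f' g']] partial_eq[OF f'] partial_eq[OF g']
    by simp
qed

lemma partial_cmult:
  fixes f :: "real^'n::finite \<Rightarrow> real"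
  assumes "f differentiable (at x)"
  shows "partial i (\<lambda>y. c * f y) x = c * partial i f x"
  using partial_mult[OF _ assms, of "\<lambda>_. c"] by (simp add: partial_const)

lemma partial_divide:
  fixes f :: "real^'n::finite \<Rightarrow> real"
  assumes "f differentiable (at x)"
  shows "partial i (\<lambda>y. f y / c) x = partial i f x / c"
  using partial_cmult[OF assms, of i "1 / c"] by simp

lemma partial_sum:
  fixes f :: "'b \<Rightarrow> real^'n::finite \<Rightarrow> real"
  assumes "\<And>e. e \<in> S \<Longrightarrow> f e differentiable (at x)"
  shows "partial i (\<lambda>y. \<Sum>e\<in>S. f e y) x = (\<Sum>e\<in>S. partial i (f e) x)"
proof -
  obtain F where F: "\<And>e. e \<in> S \<Longrightarrow> (f e has_derivative F e) (at x)"
    using assms unfolding differentiable_def by metis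
  then have "partial i (\<lambda>y. \<Sum>e\<in>S. f e y) x = (\<Sum>e\<in>S. F e (axis i 1))"
    by (intro partial_eq has_derivative_sum)
  also have "\<dots> = (\<Sum>e\<in>S. partial i (f e) x)"
    by (rule sum.cong) (auto simp: partial_eq[OF F])
  finally show ?thesis .
qed

lemma partial_cong:
  fixes f g :: "real^'n::finite \<Rightarrow> real"
  assumes "open U" "x \<in> U" "\<And>y. y \<in> U \<Longrightarrow> f y = g y"
  shows "partial i f x = partial i g x"
proof -
  have "continuous (at 0) (\<lambda>t::real. x + t *\<^sub>R axis i (1::real))"
    by (intro continuous_intros)
  then have "((\<lambda>t::real. x + t *\<^sub>R axis i 1) \<longlongrightarrow> x) (nhds 0)"
    by (simp add: tendsto_nhds_iff isCont_def)
  then have "\<forall>\<^sub>F t in nhds 0. x + t *\<^sub>R axis i 1 \<in> U"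
    using assms(1,2) by (rule topological_tendstoD)
  then have "\<forall>\<^sub>F t in nhds 0. f (x + t *\<^sub>R axis i 1) = g (x + t *\<^sub>R axis i 1)"
    by eventually_elim (simp add: assms(3))
  from DERIV_cong_ev[OF refl this refl] show ?thesis
    unfolding partial_def deriv_def by simp
qed

lemma differentiable_cong:
  fixes f g :: "real^'n::finite \<Rightarrow> real"
  assumes "open U" "x \<in> U" "\<And>y. y \<in> U \<Longrightarrow> f y = g y" "g differentiable (at x)"
  shows "f differentiable (at x)"
  using assms has_derivative_transform_within_open unfolding differentiable_def by metis

section \<open>Symmetry of second partials\<close>

lemma second_difference_eq_mixed_partial:
  fixes f :: "real^'n::finite \<Rightarrow> real"
  assumes ball: "ball x r \<subseteq> U" and h: "0 < h" "2 * h < r"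
    and f_diff: "\<forall>y\<in>U. f differentiable (at y)"
    and fi_diff: "\<forall>y\<in>U. partial i f differentiable (at y)"
  shows "\<exists>p. dist p x < 2 * h \<and>
     f (x + h *\<^sub>R axis j 1 + h *\<^sub>R axis i 1) - f (x + h *\<^sub>R axis i 1) - f (x + h *\<^sub>R axis j 1) + f x
       = h * (h * partial j (partial i f) p)"
proof -
  let ?ei = "axis i (1::real) :: real^'n" and ?ej = "axis j (1::real) :: real^'n"
  have small: "norm (s *\<^sub>R ?ei + t *\<^sub>R ?ej) < 2 * h" if "0 \<le> s" "s < h" "0 \<le> t" "t < h" for s t
    using norm_triangle_ineq[of "s *\<^sub>R ?ei" "t *\<^sub>R ?ej"] that by simp
  have in_U: "x + s *\<^sub>R ?ei + t *\<^sub>R ?ej \<in> U" if "0 \<le> s" "s \<le> h" "0 \<le> t" "t \<le> h" for s t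
  proof -
    have "norm (s *\<^sub>R ?ei + t *\<^sub>R ?ej) \<le> 2 * h"
      using norm_triangle_ineq[of "s *\<^sub>R ?ei" "t *\<^sub>R ?ej"] that by simp
    moreover have "dist x (x + (s *\<^sub>R ?ei + t *\<^sub>R ?ej)) = norm (s *\<^sub>R ?ei + t *\<^sub>R ?ej)"
      by (metis add_diff_cancel_left' dist_commute dist_norm)
    ultimately have "x + (s *\<^sub>R ?ei + t *\<^sub>R ?ej) \<in> ball x r"
      using h by simp
    then show ?thesis
      using ball by (auto simp: add.assoc)
  qed
  define \<phi> where "\<phi> s = f ((x + h *\<^sub>R ?ej) + s *\<^sub>R ?ei) - f (x + s *\<^sub>R ?ei)" for s
  have "DERIV \<phi> s :> partial i f ((x + h *\<^sub>R ?ej) + s *\<^sub>R ?ei) - partial i f (x + s *\<^sub>R ?ei)"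
    if "0 \<le> s" "s \<le> h" for s
  proof -
    have "(x + h *\<^sub>R ?ej) + s *\<^sub>R ?ei \<in> U" "x + s *\<^sub>R ?ei \<in> U"
      using in_U[of s h] in_U[of s 0] that h by (simp_all add: add_ac)
    then show ?thesis
      unfolding \<phi>_def using f_diff by (intro DERIV_diff has_real_derivative_partial) auto
  qed
  from MVT2[OF h(1), of \<phi>, OF this] obtain \<xi> where \<xi>: "0 < \<xi>" "\<xi> < h"
    and \<phi>_diff: "\<phi> h - \<phi> 0 = h * (partial i f ((x + h *\<^sub>R ?ej) + \<xi> *\<^sub>R ?ei) - partial i f (x + \<xi> *\<^sub>R ?ei))"
    by auto
  define \<psi> where "\<psi> t = partial i f ((x + \<xi> *\<^sub>R ?ei) + t *\<^sub>R ?ej)" for t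
  have "DERIV \<psi> t :> partial j (partial i f) ((x + \<xi> *\<^sub>R ?ei) + t *\<^sub>R ?ej)"
    if "0 \<le> t" "t \<le> h" for t
    unfolding \<psi>_def using in_U[of \<xi> t] that \<xi> fi_diff by (intro has_real_derivative_partial) auto
  from MVT2[OF h(1), of \<psi>, OF this] obtain \<eta> where \<eta>: "0 < \<eta>" "\<eta> < h"
    and \<psi>_diff: "\<psi> h - \<psi> 0 = h * partial j (partial i f) ((x + \<xi> *\<^sub>R ?ei) + \<eta> *\<^sub>R ?ej)"
    by auto
  define p where "p = (x + \<xi> *\<^sub>R ?ei) + \<eta> *\<^sub>R ?ej"
  have "dist p x < 2 * h"
    using small[of \<xi> \<eta>] \<xi> \<eta> by (simp add: p_def dist_norm add.assoc)
  moreover have "\<psi> h = partial i f ((x + h *\<^sub>R ?ej) + \<xi> *\<^sub>R ?ei)" "\<psi> 0 = partial i f (x + \<xi> *\<^sub>R ?ei)"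
    by (simp_all add: \<psi>_def add_ac)
  ultimately show ?thesis
    using \<phi>_diff \<psi>_diff by (auto simp: \<phi>_def p_def add_ac)
qed

lemma partial_commute:
  fixes f :: "real^'n::finite \<Rightarrow> real"
  assumes U: "open U" "x \<in> U"
    and f_diff: "\<forall>y\<in>U. f differentiable (at y)"
    and fi_diff: "\<forall>y\<in>U. partial i f differentiable (at y)"
    and fj_diff: "\<forall>y\<in>U. partial j f differentiable (at y)"
    and cont_ij: "continuous_on U (partial j (partial i f))"
    and cont_ji: "continuous_on U (partial i (partial j f))"
  shows "partial j (partial i f) x = partial i (partial j f) x"
proof (rule ccontr)
  let ?g = "partial j (partial i f)" and ?g' = "partial i (partial j f)"
  assume "?g x \<noteq> ?g' x"
  define \<epsilon> where "\<epsilon> = \<bar>?g x - ?g' x\<bar> / 2"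
  have "\<epsilon> > 0"
    using \<open>?g x \<noteq> ?g' x\<close> by (simp add: \<epsilon>_def)
  moreover have "isCont ?g x" "isCont ?g' x"
    using cont_ij cont_ji U continuous_on_eq_continuous_at by blast+
  ultimately obtain d d' where d: "d > 0" "\<And>y. dist y x < d \<Longrightarrow> dist (?g y) (?g x) < \<epsilon>"
    and d': "d' > 0" "\<And>y. dist y x < d' \<Longrightarrow> dist (?g' y) (?g' x) < \<epsilon>"
    using continuous_at_eps_delta by metis
  obtain r where r: "r > 0" "ball x r \<subseteq> U"
    using U open_contains_ball by blast
  define h where "h = min r (min d d') / 4"
  have h: "0 < h" "2 * h < r" "2 * h < d" "2 * h < d'"
    using r d d' by (auto simp: h_def)
  obtain p where p: "dist p x < 2 * h"
    "f (x + h *\<^sub>R axis j 1 + h *\<^sub>R axis i 1) - f (x + h *\<^sub>R axis i 1) - f (x + h *\<^sub>R axis j 1) + f x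
       = h * (h * ?g p)"
    using second_difference_eq_mixed_partial[OF r(2) h(1,2) f_diff fi_diff] by blast
  obtain q where q: "dist q x < 2 * h"
    "f (x + h *\<^sub>R axis i 1 + h *\<^sub>R axis j 1) - f (x + h *\<^sub>R axis j 1) - f (x + h *\<^sub>R axis i 1) + f x
       = h * (h * ?g' q)"
    using second_difference_eq_mixed_partial[OF r(2) h(1,2) f_diff fj_diff] by blast
  have "h * (h * ?g p) = h * (h * ?g' q)"
    using p(2) q(2) by (simp add: algebra_simps)
  then have "?g p = ?g' q"
    using h(1) by simp
  moreover have "dist (?g p) (?g x) < \<epsilon>" "dist (?g' q) (?g' x) < \<epsilon>"
    using d(2) d'(2) p(1) q(1) h by auto
  ultimately show False
    unfolding \<epsilon>_def dist_real_def by (auto simp: abs_if split: if_splits)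
qed

text \<open>Only the symmetry of the second partials is ever used, so it replaces their continuity in
  the definition; it passes to sums and products by the Leibniz rule alone.\<close>
definition twice_diff_sym_on :: "(real^'n::finite) set \<Rightarrow> (real^'n \<Rightarrow> real) \<Rightarrow> bool" where
  "twice_diff_sym_on U f \<longleftrightarrow>
     (\<forall>x\<in>U. f differentiable (at x) \<and> (\<forall>i. partial i f differentiable (at x)) \<and>
        (\<forall>i j. partial i (partial j f) x = partial j (partial i f) x))"

lemma twice_diff_sym_onD:
  assumes "twice_diff_sym_on U f" "x \<in> U"
  shows "f differentiable (at x)" "partial i f differentiable (at x)"
    "partial i (partial j f) x = partial j (partial i f) x"
  using assms by (auto simp: twice_diff_sym_on_def)

lemma iterpd_append: "iterpd (is @ [i]) f = iterpd is (partial i f)"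
  by (induction "is") auto

lemma smooth_fun_on_partial: "smooth_fun_on U f \<Longrightarrow> smooth_fun_on U (partial i f)"
  unfolding smooth_fun_on_def by (metis iterpd_append)

lemma smooth_imp_twice_diff_sym_on:
  assumes U: "open U" and f: "smooth_fun_on U f"
  shows "twice_diff_sym_on U f"
proof -
  have "iterpd [] f = f" "iterpd [i] f = partial i f" "iterpd [i, j] f = partial i (partial j f)" for i j
    by simp_all
  then have "f differentiable (at x)" "partial i f differentiable (at x)"
    "continuous_on U (partial i (partial j f))" if "x \<in> U" for x i j
    using f that unfolding smooth_fun_on_def by metis+
  then show ?thesis
    unfolding twice_diff_sym_on_def using partial_commute[OF U] by metis
qed

lemma twice_diff_sym_onI:
  assumes U: "open U"
    and f_diff: "\<And>x. x \<in> U \<Longrightarrow> f differentiable (at x)"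
    and partial_f: "\<And>i y. y \<in> U \<Longrightarrow> partial i f y = g i y"
    and g_diff: "\<And>i x. x \<in> U \<Longrightarrow> g i differentiable (at x)"
    and g_sym: "\<And>i j x. x \<in> U \<Longrightarrow> partial i (g j) x = partial j (g i) x"
  shows "twice_diff_sym_on U f"
  unfolding twice_diff_sym_on_def
proof (intro ballI conjI allI)
  fix x i j assume "x \<in> U"
  show "f differentiable (at x)"
    using f_diff \<open>x \<in> U\<close> .
  show "partial i f differentiable (at x)"
    using differentiable_cong[OF U \<open>x \<in> U\<close> partial_f g_diff] \<open>x \<in> U\<close> by blast
  have "partial i (partial j f) x = partial i (g j) x" for i j
    using partial_cong[OF U \<open>x \<in> U\<close> partial_f] .
  then show "partial i (partial j f) x = partial j (partial i f) x"
    using g_sym \<open>x \<in> U\<close> by simp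
qed

lemma twice_diff_sym_on_const: "twice_diff_sym_on U (\<lambda>x. c)"
  unfolding twice_diff_sym_on_def by (simp add: partial_const[abs_def])

lemma twice_diff_sym_on_add:
  assumes U: "open U" and f: "twice_diff_sym_on U f" and g: "twice_diff_sym_on U g"
  shows "twice_diff_sym_on U (\<lambda>x. f x + g x)"
proof (rule twice_diff_sym_onI[OF U])
  note fD = twice_diff_sym_onD[OF f] and gD = twice_diff_sym_onD[OF g]
  show "(\<lambda>x. f x + g x) differentiable (at x)" if "x \<in> U" for x
    using fD gD that by auto
  show "partial i (\<lambda>x. f x + g x) y = partial i f y + partial i g y" if "y \<in> U" for i y
    using fD gD that by (simp add: partial_add)
  show "(\<lambda>y. partial i f y + partial i g y) differentiable (at x)" if "x \<in> U" for i x
    using fD gD that by auto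
  show "partial i (\<lambda>y. partial j f y + partial j g y) x = partial j (\<lambda>y. partial i f y + partial i g y) x"
    if "x \<in> U" for i j x
    using fD gD that by (simp add: partial_add)
qed

lemma twice_diff_sym_on_mult:
  assumes U: "open U" and f: "twice_diff_sym_on U f" and g: "twice_diff_sym_on U g"
  shows "twice_diff_sym_on U (\<lambda>x. f x * g x)"
proof (rule twice_diff_sym_onI[OF U])
  note fD = twice_diff_sym_onD[OF f] and gD = twice_diff_sym_onD[OF g]
  show "(\<lambda>x. f x * g x) differentiable (at x)" if "x \<in> U" for x
    using fD gD that by auto
  show "partial i (\<lambda>x. f x * g x) y = partial i f y * g y + f y * partial i g y" if "y \<in> U" for i y
    using fD gD that by (simp add: partial_mult)
  show "(\<lambda>y. partial i f y * g y + f y * partial i g y) differentiable (at x)" if "x \<in> U" for i x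
    using fD gD that by auto
  show "partial i (\<lambda>y. partial j f y * g y + f y * partial j g y) x
      = partial j (\<lambda>y. partial i f y * g y + f y * partial i g y) x" if "x \<in> U" for i j x
    using fD gD that by (simp add: partial_add partial_mult algebra_simps)
qed

lemma twice_diff_sym_on_cmult:
  "open U \<Longrightarrow> twice_diff_sym_on U f \<Longrightarrow> twice_diff_sym_on U (\<lambda>x. c * f x)"
  using twice_diff_sym_on_mult[OF _ twice_diff_sym_on_const] by blast

lemma twice_diff_sym_on_diff:
  assumes "open U" "twice_diff_sym_on U f" "twice_diff_sym_on U g"
  shows "twice_diff_sym_on U (\<lambda>x. f x - g x)"
  using twice_diff_sym_on_add[OF assms(1,2) twice_diff_sym_on_cmult[OF assms(1,3), of "-1"]]
  by simp

lemma twice_diff_sym_on_sum: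
  assumes "open U" "\<And>e. e \<in> S \<Longrightarrow> twice_diff_sym_on U (f e)"
  shows "twice_diff_sym_on U (\<lambda>x. \<Sum>e\<in>S. f e x)"
  using assms(2)
proof (induction S rule: infinite_finite_induct)
  case (insert e S)
  then show ?case
    by (simp add: twice_diff_sym_on_add[OF assms(1)])
qed (simp_all add: twice_diff_sym_on_const)

lemma twice_diff_sym_on_divide:
  "open U \<Longrightarrow> twice_diff_sym_on U f \<Longrightarrow> twice_diff_sym_on U (\<lambda>x. f x / c)"
  using twice_diff_sym_on_cmult[of U f "1 / c"] by simp

lemma twice_diff_sym_on_minus:
  "open U \<Longrightarrow> twice_diff_sym_on U f \<Longrightarrow> twice_diff_sym_on U (\<lambda>x. - f x)"
  using twice_diff_sym_on_cmult[of U f "- 1"] by simp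

lemma twice_diff_sym_on_if:
  "twice_diff_sym_on U f \<Longrightarrow> twice_diff_sym_on U g \<Longrightarrow> twice_diff_sym_on U (\<lambda>x. if P then f x else g x)"
  by (cases P) simp_all

section \<open>Connections on trivial bundles\<close>

lemma sum_option: "(\<Sum>E\<in>(UNIV::'a::finite option set). f E) = f None + (\<Sum>e\<in>UNIV. f (Some e))"
proof -
  have "(\<Sum>E\<in>(UNIV::'a option set). f E) = f None + (\<Sum>E\<in>range Some. f E)"
    by (simp add: UNIV_option_conv)
  also have "(\<Sum>E\<in>range Some. f E) = (\<Sum>e\<in>UNIV. f (Some e))"
    by (subst sum.reindex) auto
  finally show ?thesis .
qed

definition mmult :: "('i \<Rightarrow> 'j::finite \<Rightarrow> real) \<Rightarrow> ('j \<Rightarrow> 'k \<Rightarrow> real) \<Rightarrow> 'i \<Rightarrow> 'k \<Rightarrow> real" where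
  "mmult M N = (\<lambda>i k. \<Sum>j\<in>UNIV. M i j * N j k)"

definition commutator :: "('i::finite \<Rightarrow> 'i \<Rightarrow> real) \<Rightarrow> ('i \<Rightarrow> 'i \<Rightarrow> real) \<Rightarrow> 'i \<Rightarrow> 'i \<Rightarrow> real" where
  "commutator M N = mmult M N - mmult N M"

lemma mmult_assoc: "mmult (mmult M N) P = mmult M (mmult N P)"
proof -
  have "(\<Sum>k\<in>UNIV. (\<Sum>l\<in>UNIV. M i l * N l k) * P k j) = (\<Sum>k\<in>UNIV. \<Sum>l\<in>UNIV. M i l * N l k * P k j)"
    for i j by (simp add: sum_distrib_right)
  also have "\<dots> i j = (\<Sum>l\<in>UNIV. \<Sum>k\<in>UNIV. M i l * N l k * P k j)" for i j
    by (rule sum.swap)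
  also have "\<dots> i j = (\<Sum>l\<in>UNIV. M i l * (\<Sum>k\<in>UNIV. N l k * P k j))" for i j
    by (simp add: sum_distrib_left mult.assoc)
  finally show ?thesis
    by (simp add: mmult_def fun_eq_iff)
qed

lemma mmult_add_left: "mmult (M + N) P = mmult M P + mmult N P"
  by (simp add: mmult_def fun_eq_iff algebra_simps sum.distrib)

lemma mmult_add_right: "mmult P (M + N) = mmult P M + mmult P N"
  by (simp add: mmult_def fun_eq_iff algebra_simps sum.distrib)

lemma mmult_diff_left: "mmult (M - N) P = mmult M P - mmult N P"
  by (simp add: mmult_def fun_eq_iff algebra_simps sum_subtractf)

lemma mmult_diff_right: "mmult P (M - N) = mmult P M - mmult P N"
  by (simp add: mmult_def fun_eq_iff algebra_simps sum_subtractf)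

lemma mmult_uminus_left: "mmult (- M) P = - mmult M P"
  by (simp add: mmult_def fun_eq_iff sum_negf)

lemmas mmult_distribs = mmult_add_left mmult_add_right mmult_diff_left mmult_diff_right
  mmult_uminus_left

definition mval :: "('i \<Rightarrow> 'j \<Rightarrow> 'x \<Rightarrow> real) \<Rightarrow> 'x \<Rightarrow> 'i \<Rightarrow> 'j \<Rightarrow> real" where
  "mval M x = (\<lambda>C D. M C D x)"

definition mpartial :: "'n \<Rightarrow> ('i \<Rightarrow> 'j \<Rightarrow> real^'n \<Rightarrow> real) \<Rightarrow> real^'n \<Rightarrow> 'i \<Rightarrow> 'j \<Rightarrow> real" where
  "mpartial c M x = (\<lambda>C D. partial c (M C D) x)"

lemma commutator_swap: "commutator N M = - commutator M N"
  by (simp add: commutator_def)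

lemma mpartial_mmult:
  fixes M :: "'i \<Rightarrow> 'j::finite \<Rightarrow> real^'n::finite \<Rightarrow> real"
  assumes "\<And>C D. M C D differentiable (at x)" "\<And>C D. N C D differentiable (at x)"
  shows "mpartial c (\<lambda>C D y. mmult (mval M y) (mval N y) C D) x
    = mmult (mpartial c M x) (mval N x) + mmult (mval M x) (mpartial c N x)"
  by (simp add: fun_eq_iff mpartial_def mmult_def mval_def partial_sum partial_mult assms sum.distrib)

lemma mpartial_commutator:
  fixes M :: "'i::finite \<Rightarrow> 'i \<Rightarrow> real^'n::finite \<Rightarrow> real"
  assumes "\<And>C D. M C D differentiable (at x)" "\<And>C D. N C D differentiable (at x)"
  shows "mpartial c (\<lambda>C D y. commutator (mval M y) (mval N y) C D) x
    = commutator (mpartial c M x) (mval N x) + commutator (mval M x) (mpartial c N x)"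
  by (simp add: fun_eq_iff commutator_def mpartial_def mmult_def mval_def partial_sum partial_diff
      partial_mult assms sum.distrib sum_subtractf)

definition curvature ::
  "('n::finite \<Rightarrow> 'i::finite \<Rightarrow> 'i \<Rightarrow> real^'n \<Rightarrow> real) \<Rightarrow> 'n \<Rightarrow> 'n \<Rightarrow> 'i \<Rightarrow> 'i \<Rightarrow> real^'n \<Rightarrow> real" where
  "curvature A a b C D x =
     partial a (A b C D) x - partial b (A a C D) x
     + (\<Sum>E\<in>UNIV. A a C E x * A b E D x - A b C E x * A a E D x)"

lemma mval_curvature:
  "mval (curvature A a b) x = mpartial a (A b) x - mpartial b (A a) x + commutator (mval (A a) x) (mval (A b) x)"
  by (simp add: fun_eq_iff mval_def mpartial_def commutator_def mmult_def curvature_def sum_subtractf)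

lemma curvature_swap: "curvature A b a C D x = - curvature A a b C D x"
  by (simp add: curvature_def sum_subtractf)

definition cov_deriv ::
  "('n \<Rightarrow> 'i::finite \<Rightarrow> 'i \<Rightarrow> real^'n \<Rightarrow> real) \<Rightarrow> 'n::finite \<Rightarrow> ('i \<Rightarrow> 'i \<Rightarrow> real^'n \<Rightarrow> real)
     \<Rightarrow> real^'n \<Rightarrow> 'i \<Rightarrow> 'i \<Rightarrow> real" where
  "cov_deriv A c M x = mpartial c M x + commutator (mval (A c) x) (mval M x)"

definition parallel_on ::
  "('n \<Rightarrow> 'i::finite \<Rightarrow> 'i \<Rightarrow> real^'n \<Rightarrow> real) \<Rightarrow> (real^'n::finite) set \<Rightarrow> ('i \<Rightarrow> 'i \<Rightarrow> real^'n \<Rightarrow> real) \<Rightarrow> bool" where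
  "parallel_on A U T \<longleftrightarrow> (\<forall>x\<in>U. \<forall>c. cov_deriv A c T x = 0)"

locale smooth_connection =
  fixes U :: "(real^'n::finite) set" and A :: "'n \<Rightarrow> 'i::finite \<Rightarrow> 'i \<Rightarrow> real^'n \<Rightarrow> real"
  assumes open_U: "open U"
    and conn_twice_diff_sym: "twice_diff_sym_on U (A a C D)"
begin

lemma conn_differentiable: "x \<in> U \<Longrightarrow> A a C D differentiable (at x)"
  and partial_conn_differentiable: "x \<in> U \<Longrightarrow> partial c (A a C D) differentiable (at x)"
  using twice_diff_sym_onD[OF conn_twice_diff_sym] by blast+

lemma curvature_differentiable: "x \<in> U \<Longrightarrow> curvature A a b C D differentiable (at x)"
  unfolding curvature_def[abs_def]
  by (auto intro!: differentiable_add differentiable_diff differentiable_sum differentiable_mult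
      conn_differentiable partial_conn_differentiable)

lemma mpartial_curvature:
  assumes "x \<in> U"
  shows "mpartial c (curvature A a b) x
    = mpartial c (\<lambda>C D. partial a (A b C D)) x - mpartial c (\<lambda>C D. partial b (A a C D)) x
      + commutator (mpartial c (A a) x) (mval (A b) x) + commutator (mval (A a) x) (mpartial c (A b) x)"
  unfolding curvature_def[abs_def]
  by (simp add: fun_eq_iff commutator_def mpartial_def mmult_def mval_def partial_add partial_diff
      partial_sum partial_mult assms conn_differentiable partial_conn_differentiable sum.distrib
      sum_subtractf differentiable_sum)

lemma bianchi_identity:
  assumes "x \<in> U"
  shows "cov_deriv A c (curvature A a b) x + cov_deriv A a (curvature A b c) x
    + cov_deriv A b (curvature A c a) x = 0"
proof -
  have "mpartial c (\<lambda>C D. partial a (A b C D)) x = mpartial a (\<lambda>C D. partial c (A b C D)) x"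
    for a b c
    using twice_diff_sym_onD(3)[OF conn_twice_diff_sym assms] by (simp add: mpartial_def)
  then show ?thesis
    by (simp add: cov_deriv_def mpartial_curvature assms mval_curvature commutator_def
        mmult_distribs mmult_assoc algebra_simps)
qed

lemma parallel_commutes_curvature:
  assumes T: "\<And>C D. twice_diff_sym_on U (T C D)" and par: "parallel_on A U T" and x: "x \<in> U"
  shows "mmult (mval (curvature A a b) x) (mval T x) = mmult (mval T x) (mval (curvature A a b) x)"
proof -
  have dT: "\<And>C D. T C D differentiable (at x)"
    using twice_diff_sym_onD(1)[OF T x] .
  have par_at: "mpartial c T y = commutator (mval T y) (mval (A c) y)" if "y \<in> U" for c y
  proof -
    have "cov_deriv A c T y = 0"
      using par that by (simp add: parallel_on_def)
    then show ?thesis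
      by (simp add: cov_deriv_def commutator_swap[of "mval (A c) y"])
  qed
  have "partial c (T C D) y = commutator (mval T y) (mval (A c) y) C D" if "y \<in> U" for c C D y
    using par_at[OF that] by (simp add: mpartial_def fun_eq_iff)
  then have "mpartial c (\<lambda>C D. partial d (T C D)) x
      = mpartial c (\<lambda>C D y. commutator (mval T y) (mval (A d) y) C D) x" for c d
    unfolding mpartial_def by (intro ext partial_cong[OF open_U x]) auto
  also have "\<dots> c d = commutator (mpartial c T x) (mval (A d) x) + commutator (mval T x) (mpartial c (A d) x)"
    for c d
    by (rule mpartial_commutator[OF dT conn_differentiable[OF x]])
  finally have second: "mpartial c (\<lambda>C D. partial d (T C D)) x
      = commutator (commutator (mval T x) (mval (A c) x)) (mval (A d) x)
        + commutator (mval T x) (mpartial c (A d) x)" for c d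
    by (simp add: par_at[OF x])
  have "mpartial a (\<lambda>C D. partial b (T C D)) x = mpartial b (\<lambda>C D. partial a (T C D)) x"
    using twice_diff_sym_onD(3)[OF T x] by (simp add: mpartial_def)
  then have "commutator (mval T x) (mval (curvature A a b) x) = 0"
    unfolding second mval_curvature
    by (simp add: commutator_def mmult_distribs mmult_assoc algebra_simps)
  then show ?thesis
    by (simp add: commutator_def)
qed

end

lemma sum_mmult_diag:
  "(\<Sum>c\<in>UNIV. mmult (P c) Q (Some c) E) = (\<Sum>D\<in>UNIV. (\<Sum>c\<in>UNIV. P c (Some c) D) * Q D E)"
proof -
  have "(\<Sum>c\<in>UNIV. mmult (P c) Q (Some c) E) = (\<Sum>c\<in>UNIV. \<Sum>D\<in>UNIV. P c (Some c) D * Q D E)"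
    by (simp add: mmult_def)
  also have "\<dots> = (\<Sum>D\<in>UNIV. \<Sum>c\<in>UNIV. P c (Some c) D * Q D E)"
    by (rule sum.swap)
  finally show ?thesis
    by (simp add: sum_distrib_right)
qed

text \<open>\<^const>\<open>None\<close> indexes the \<open>E(-1)\<close> slot of the splitting, so the \<^const>\<open>None\<close> column of a
  matrix is its value on the canonical tractor \<open>X\<close>. The assumptions are the features of the
  normal projective tractor connection that the argument uses: its curvature kills \<open>X\<close>, its
  trace over the form index and the upper \<open>TM(-1)\<close> index vanishes (the projective Weyl tensor
  is trace-free), and the \<open>TM(-1)\<close> component of \<open>\<nabla>\<^sub>a X\<close> is \<open>\<delta>\<^sup>b\<^sub>a\<close>.\<close>
locale normal_tractor_connection = smooth_connection U A
  for U :: "(real^'n::finite) set" and A :: "'n \<Rightarrow> 'n option \<Rightarrow> 'n option \<Rightarrow> real^'n \<Rightarrow> real" +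
  assumes curvature_X: "x \<in> U \<Longrightarrow> curvature A a b C None x = 0"
    and curvature_trace: "x \<in> U \<Longrightarrow> (\<Sum>c\<in>UNIV. curvature A c a (Some c) D x) = 0"
    and conn_X: "A a (Some b) None x = (if b = a then 1 else 0)"
begin

lemma curvature_trace': "x \<in> U \<Longrightarrow> (\<Sum>c\<in>UNIV. curvature A b c (Some c) D x) = 0"
  using curvature_trace by (simp add: curvature_swap[of A b] sum_negf)

lemma mmult_conn_X: "mmult P (mval (A c) x) D None = P D (Some c) + P D None * A c None None x"
  by (simp add: mmult_def mval_def sum_option conn_X if_distrib[of "(*) _"] cong: if_cong)

lemma curvature_parallel_X:
  assumes T: "\<And>C D. twice_diff_sym_on U (T C D)" and par: "parallel_on A U T" and x: "x \<in> U"
  shows "mmult (mval (curvature A a b) x) (mval T x) C None = 0"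
  using parallel_commutes_curvature[OF T par x] by (simp add: mmult_def mval_def curvature_X[OF x])

lemma sum_cov_deriv_X_eq_0:
  assumes x: "x \<in> U"
    and M_diff: "\<And>c C D. M c C D differentiable (at x)"
    and M_trace: "\<And>y D. y \<in> U \<Longrightarrow> (\<Sum>c\<in>UNIV. M c (Some c) D y) = 0"
    and M_X: "\<And>c E. mmult (mval (M c) x) Q E None = 0"
  shows "(\<Sum>c\<in>UNIV. mmult (cov_deriv A a (M c) x) Q (Some c) None) = 0"
proof -
  have "(\<Sum>c\<in>UNIV. mpartial a (M c) x (Some c) D) = partial a (\<lambda>y. \<Sum>c\<in>UNIV. M c (Some c) D y) x" for D
    by (simp add: mpartial_def partial_sum M_diff)
  also have "\<dots> D = 0" for D
    using partial_cong[OF open_U x M_trace] by (simp add: partial_const)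
  finally have "(\<Sum>c\<in>UNIV. mmult (mpartial a (M c) x) Q (Some c) None) = 0"
    by (simp add: sum_mmult_diag)
  moreover have "(\<Sum>c\<in>UNIV. mmult (mmult (mval (M c) x) (mval (A a) x)) Q (Some c) None) = 0"
    unfolding mmult_assoc sum_mmult_diag by (simp add: mval_def M_trace[OF x])
  moreover have "mmult (mmult (mval (A a) x) (mval (M c) x)) Q E None = 0" for c E
    unfolding mmult_assoc by (simp add: mmult_def[of "mval (A a) x"] M_X)
  ultimately show ?thesis
    by (simp add: cov_deriv_def commutator_def mmult_distribs
        sum.distrib sum_subtractf)
qed

lemma trace_curvature_parallel_eq_0:
  assumes T: "\<And>C D. twice_diff_sym_on U (T C D)" and par: "parallel_on A U T" and x: "x \<in> U"
  shows "(\<Sum>C\<in>UNIV. \<Sum>D\<in>UNIV. curvature A a b C D x * T D C x) = 0"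
proof -
  note RT_X = curvature_parallel_X[OF T par]
  have dT: "\<And>C D. T C D differentiable (at x)"
    using twice_diff_sym_onD(1)[OF T x] .
  let ?R = "mval (curvature A a b) x" and ?T = "mval T x"
  have diag: "mmult ?R ?T (Some c) (Some c) = - mmult (cov_deriv A c (curvature A a b) x) ?T (Some c) None"
    for c
  proof -
    have "mpartial c (\<lambda>C D y. mmult (mval (curvature A a b) y) (mval T y) C D) x (Some c) None = 0"
      unfolding mpartial_def using partial_cong[OF open_U x RT_X] by (simp add: partial_const)
    then have R_partial_T: "mmult ?R (mpartial c T x) (Some c) None
        = - mmult (mpartial c (curvature A a b) x) ?T (Some c) None"
      by (simp add: mpartial_mmult curvature_differentiable[OF x] dT eq_neg_iff_add_eq_0)
    have T_A: "mmult ?T (mval (A c) x) = mpartial c T x + mmult (mval (A c) x) ?T"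
      using par x by (simp add: parallel_on_def cov_deriv_def commutator_def algebra_simps)
    have A_R_T: "mmult (mval (A c) x) (mmult ?R ?T) (Some c) None = 0"
      using RT_X[OF x] by (simp add: mmult_def[of "mval (A c) x"])
    show ?thesis
      using mmult_conn_X[of "mmult ?R ?T" c x "Some c"] RT_X[OF x] R_partial_T T_A A_R_T
      by (simp add: mmult_assoc cov_deriv_def commutator_def mmult_distribs)
  qed
  have "(\<Sum>C\<in>UNIV. \<Sum>D\<in>UNIV. curvature A a b C D x * T D C x) = (\<Sum>c\<in>UNIV. mmult ?R ?T (Some c) (Some c))"
    using RT_X[OF x] by (simp add: sum_option mmult_def mval_def)
  also have "\<dots> = (\<Sum>c\<in>UNIV. mmult (cov_deriv A a (curvature A b c) x) ?T (Some c) None)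
      + (\<Sum>c\<in>UNIV. mmult (cov_deriv A b (curvature A c a) x) ?T (Some c) None)"
  proof -
    have "cov_deriv A c (curvature A a b) x
        = - (cov_deriv A a (curvature A b c) x + cov_deriv A b (curvature A c a) x)" for c
      unfolding eq_neg_iff_add_eq_0 using bianchi_identity[OF x, of c a b] by (simp add: add.assoc)
    then show ?thesis
      by (simp add: diag mmult_distribs sum.distrib)
  qed
  also have "\<dots> = 0"
    using sum_cov_deriv_X_eq_0[OF x, where M = "\<lambda>c. curvature A b c" and Q = ?T and a = a]
      sum_cov_deriv_X_eq_0[OF x, where M = "\<lambda>c. curvature A c a" and Q = ?T and a = b]
    by (simp add: curvature_differentiable[OF x] curvature_trace curvature_trace' RT_X[OF x])
  finally show ?thesis .
qed

end

section \<open>The normal projective tractor connection\<close>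

lemma tconn_Some_Some:
  "tconn (Gam :: 'n::finite christoffel) a (Some b) (Some c)
     = (\<lambda>x. Gam b a c x - (if b = c then trGam Gam a x / (dimn TYPE('n) + 2) else 0))"
  and tconn_Some_None: "tconn Gam a (Some b) None = (\<lambda>x. if b = a then 1 else 0)"
  and tconn_None_Some: "tconn Gam a None (Some c) = (\<lambda>x. - schouten Gam a c x)"
  and tconn_None_None: "tconn Gam a None None = (\<lambda>x. - (trGam Gam a x / (dimn TYPE('n) + 2)))"
  by (simp_all add: fun_eq_iff tconn_def)

lemmas tconn_simps = tconn_Some_Some tconn_Some_None tconn_None_Some tconn_None_None

lemma curvature_tconn: "tcurv Gam = curvature (tconn Gam)"
  by (simp add: fun_eq_iff tcurv_def curvature_def)

lemma parallel_adjoint_imp_parallel_on: "parallel_adjoint Gam U T \<Longrightarrow> parallel_on (tconn Gam) U T"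
  by (simp add: parallel_adjoint_def parallel_on_def cov_deriv_def commutator_def mpartial_def
      mmult_def mval_def fun_eq_iff sum_subtractf)

locale projective_structure =
  fixes U :: "(real^'n::finite) set" and Gam :: "'n christoffel"
  assumes card_ge_2: "CARD('n) \<ge> 2"
    and open_U: "open U"
    and smooth_Gam: "smooth_fun_on U (Gam a b c)"
    and Gam_sym: "x \<in> U \<Longrightarrow> Gam a b c x = Gam a c b x"
begin

lemma dimn_ge_1: "dimn TYPE('n) \<ge> 1"
  using card_ge_2 by (simp add: dimn_def)

lemma card_eq_dimn: "real CARD('n) = dimn TYPE('n) + 1"
  by (simp add: dimn_def)

lemma twice_diff_sym_Gam: "twice_diff_sym_on U (Gam a b c)"
  and twice_diff_sym_partial_Gam: "twice_diff_sym_on U (partial i (Gam a b c))"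
  using smooth_imp_twice_diff_sym_on[OF open_U] smooth_fun_on_partial smooth_Gam by blast+

lemma Gam_differentiable: "x \<in> U \<Longrightarrow> Gam a b c differentiable (at x)"
  using twice_diff_sym_onD(1)[OF twice_diff_sym_Gam] .

lemma twice_diff_sym_trGam: "twice_diff_sym_on U (trGam Gam a)"
  unfolding trGam_def[abs_def] by (intro twice_diff_sym_on_sum open_U twice_diff_sym_Gam)

lemma trGam_differentiable: "x \<in> U \<Longrightarrow> trGam Gam a differentiable (at x)"
  using twice_diff_sym_onD(1)[OF twice_diff_sym_trGam] .

lemma twice_diff_sym_schouten: "twice_diff_sym_on U (schouten Gam a b)"
proof -
  have "twice_diff_sym_on U (ric Gam a b)" for a b
    unfolding ric_def[abs_def] riem_def
    by (intro twice_diff_sym_on_sum twice_diff_sym_on_add twice_diff_sym_on_diff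
        twice_diff_sym_on_mult open_U twice_diff_sym_Gam twice_diff_sym_partial_Gam)
  then show ?thesis
    unfolding schouten_def[abs_def]
    by (intro twice_diff_sym_on_divide twice_diff_sym_on_add twice_diff_sym_on_cmult open_U)
qed

sublocale smooth_connection U "tconn Gam"
proof
  show "twice_diff_sym_on U (tconn Gam a C D)" for a C D
    by (cases C; cases D)
      (simp_all add: tconn_simps twice_diff_sym_on_const twice_diff_sym_on_diff twice_diff_sym_on_if
        twice_diff_sym_on_divide twice_diff_sym_on_minus open_U twice_diff_sym_Gam
        twice_diff_sym_trGam twice_diff_sym_schouten)
qed (rule open_U)

lemma partial_trGam: "x \<in> U \<Longrightarrow> partial i (trGam Gam b) x = (\<Sum>a\<in>UNIV. partial i (Gam a a b) x)"
  unfolding trGam_def[abs_def] by (simp add: partial_sum Gam_differentiable)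

lemma ric_eq:
  "ric Gam b d x = (\<Sum>a\<in>UNIV. partial a (Gam a b d) x) - (\<Sum>a\<in>UNIV. partial b (Gam a a d) x)
     + (\<Sum>a\<in>UNIV. \<Sum>e\<in>UNIV. Gam a a e x * Gam e b d x) - (\<Sum>a\<in>UNIV. \<Sum>e\<in>UNIV. Gam a b e x * Gam e a d x)"
  by (simp add: ric_def riem_def sum.distrib sum_subtractf)

lemma ric_skew:
  assumes x: "x \<in> U"
  shows "ric Gam b d x - ric Gam d b x = partial d (trGam Gam b) x - partial b (trGam Gam d) x"
proof -
  have "partial a (Gam a b d) x = partial a (Gam a d b) x" for a
    by (rule partial_cong[OF open_U x]) (simp add: Gam_sym)
  moreover have "(\<Sum>a\<in>UNIV. \<Sum>e\<in>UNIV. Gam a d e x * Gam e a b x)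
      = (\<Sum>a\<in>UNIV. \<Sum>e\<in>UNIV. Gam a b e x * Gam e a d x)"
    using sum.swap[of "\<lambda>a e. Gam a d e x * Gam e a b x"] x by (simp add: Gam_sym[of x] mult.commute)
  ultimately show ?thesis
    using x by (simp add: ric_eq partial_trGam Gam_sym[of x _ _ b] sum_subtractf)
qed

lemma schouten_skew:
  "schouten Gam a b x - schouten Gam b a x = (ric Gam a b x - ric Gam b a x) / (dimn TYPE('n) + 2)"
  using dimn_ge_1 unfolding schouten_def by (simp add: divide_simps) (simp add: algebra_simps)

lemma dimn_mult_schouten:
  "dimn TYPE('n) * schouten Gam a d x = ric Gam a d x - (ric Gam a d x - ric Gam d a x) / (dimn TYPE('n) + 2)"
  using dimn_ge_1 unfolding schouten_def by (simp add: divide_simps) (simp add: algebra_simps)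

lemma partial_tconn_Some_Some:
  assumes x: "x \<in> U"
  shows "partial i (tconn Gam a (Some b) (Some c)) x
    = partial i (Gam b a c) x - (if b = c then partial i (trGam Gam a) x / (dimn TYPE('n) + 2) else 0)"
proof -
  have "(\<lambda>y. trGam Gam a y / (dimn TYPE('n) + 2)) differentiable (at x)"
    using trGam_differentiable[OF x] by (simp add: divide_inverse)
  then show ?thesis
    by (cases "b = c")
      (simp_all add: tconn_simps partial_diff partial_divide Gam_differentiable[OF x] trGam_differentiable[OF x])
qed

lemma partial_tconn_None_None:
  assumes x: "x \<in> U"
  shows "partial i (tconn Gam a None None) x = - (partial i (trGam Gam a) x / (dimn TYPE('n) + 2))"
  using partial_cmult[OF trGam_differentiable[OF x], of i "- 1 / (dimn TYPE('n) + 2)"]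
  by (simp add: tconn_simps)

lemma curvature_tconn_X:
  assumes x: "x \<in> U"
  shows "curvature (tconn Gam) a b C None x = 0"
proof (cases C)
  case (Some c)
  then show ?thesis
    using x Gam_sym unfolding curvature_def
    by (simp add: sum_option tconn_simps partial_const if_distrib[of "\<lambda>u. u * _"]
        if_distrib[of "(*) _"] sum.distrib sum_subtractf algebra_simps cong: if_cong)
next
  case None
  have "curvature (tconn Gam) a b None None x
      = - (partial a (trGam Gam b) x - partial b (trGam Gam a) x) / (dimn TYPE('n) + 2)
        - (schouten Gam a b x - schouten Gam b a x)"
    unfolding curvature_def partial_tconn_None_None[OF x]
    by (simp add: sum_option tconn_simps if_distrib[of "\<lambda>u. u * _"]
        if_distrib[of "(*) _"] sum_subtractf diff_divide_distrib algebra_simps cong: if_cong)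
  also have "\<dots> = 0"
    by (simp add: schouten_skew ric_skew[OF x] diff_divide_distrib)
  finally show ?thesis
    using None by simp
qed

lemma curvature_tconn_trace:
  assumes x: "x \<in> U"
  shows "(\<Sum>c\<in>UNIV. curvature (tconn Gam) c a (Some c) D x) = 0"
proof (cases D)
  case None
  then show ?thesis
    by (simp add: curvature_tconn_X[OF x])
next
  case (Some d)
  let ?k = "dimn TYPE('n) + 2" and ?A = "tconn Gam"
  have quadratic: "(\<Sum>c\<in>UNIV. \<Sum>E\<in>UNIV. ?A c (Some c) E x * ?A a E (Some d) x - ?A a (Some c) E x * ?A c E (Some d) x)
      = (\<Sum>c\<in>UNIV. \<Sum>e\<in>UNIV. Gam c c e x * Gam e a d x) - (\<Sum>c\<in>UNIV. \<Sum>e\<in>UNIV. Gam c a e x * Gam e c d x)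
        - dimn TYPE('n) * schouten Gam a d x"
    using card_eq_dimn
    by (simp add: sum_option tconn_simps if_distrib[of "\<lambda>u. u * _"] if_distrib[of "(*) _"]
        sum.distrib sum_subtractf trGam_def algebra_simps cong: if_cong)
  have "(\<Sum>c\<in>UNIV. curvature ?A c a (Some c) (Some d) x)
      = (\<Sum>c\<in>UNIV. partial c (Gam c a d) x) - partial d (trGam Gam a) x / ?k
        - (partial a (trGam Gam d) x - partial a (trGam Gam d) x / ?k)
        + (\<Sum>c\<in>UNIV. \<Sum>E\<in>UNIV. ?A c (Some c) E x * ?A a E (Some d) x - ?A a (Some c) E x * ?A c E (Some d) x)"
    by (simp add: curvature_def sum.distrib sum_subtractf partial_tconn_Some_Some[OF x] partial_trGam[OF x])
  also have "\<dots> = 0"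
  proof -
    have "dimn TYPE('n) * schouten Gam a d x
        = ric Gam a d x - (partial d (trGam Gam a) x - partial a (trGam Gam d) x) / ?k"
      using dimn_mult_schouten ric_skew[OF x] by simp
    moreover have "(partial d (trGam Gam a) x - partial a (trGam Gam d) x) / ?k
        = partial d (trGam Gam a) x / ?k - partial a (trGam Gam d) x / ?k"
      by (rule diff_divide_distrib)
    ultimately show ?thesis
      using ric_eq[of a d x] partial_trGam[OF x, of a d] quadratic by linarith
  qed
  finally show ?thesis
    using Some by simp
qed

sublocale normal_tractor_connection U "tconn Gam"
  by unfold_locales (simp_all add: curvature_tconn_X curvature_tconn_trace tconn_Some_None)

end

theorem lemma4p3:
  fixes U :: "(real^'n::finite) set"
    and Gam :: "'n christoffel"
    and T :: "'n option \<Rightarrow> 'n option \<Rightarrow> real^'n \<Rightarrow> real"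
  assumes "CARD('n) \<ge> 2"
    and "open U"
    and "\<forall>a b c. smooth_fun_on U (Gam a b c)"
    and "\<forall>a b c. \<forall>x\<in>U. Gam a b c x = Gam a c b x"
    and "parallel_adjoint Gam U T"
  shows "\<forall>x\<in>U. \<forall>a b. (\<Sum>C\<in>UNIV. \<Sum>D\<in>UNIV. tcurv Gam a b C D x * T D C x) = 0"
proof -
  interpret projective_structure U Gam
    using assms(1-4) by unfold_locales auto
  have T: "twice_diff_sym_on U (T C D)" for C D
    using assms(5) smooth_imp_twice_diff_sym_on[OF assms(2)] by (simp add: parallel_adjoint_def)
  have "parallel_on (tconn Gam) U T"
    using assms(5) by (rule parallel_adjoint_imp_parallel_on)
  then show ?thesis
    using trace_curvature_parallel_eq_0[OF T] by (simp add: curvature_tconn)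
qed

end
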